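(* For every affine map $\phi(w)=aw+b$ with $a>0$ and $b\in\mathbb{C}$, $\mathrm{Re}(b)\geq 0$, the composition operator $C_{\phi}f=f\circ\phi$ is not Li-Yorke chaotic on $H^2(\mathbb{C}_{+})$.
   Context: $\mathbb{C}_{+}=\{w\in\mathbb{C}:\mathrm{Re}(w)>0\}$. $H^2(\mathbb{C}_{+})$ is the Hardy space of holomorphic $f$ on $\mathbb{C}_{+}$ with finite norm $\|f\|_2^2=\sup_{0<x<\infty}\frac{1}{\pi}\int_{-\infty}^{\infty}|f(x+iy)|^2\,dy$; $C_\phi$ is bounded on it. An operator $T$ on a Banach space $X$ is Li-Yorke chaotic if there is an uncountable set $S\subset X$ such that for all $x,y\in S$ with $x\neq y$: $\liminf_{n\to\infty}\|T^nx-T^ny\|=0$ and $\limsup_{n\to\infty}\|T^nx-T^ny\|>0$. *)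

theory Defs
  imports "HOL-Analysis.Analysis" "HOL-Library.Liminf_Limsup"
begin

definition right_half_plane :: "complex set" where
  "right_half_plane = {w. Re w > 0}"

definition h2_sup_integral :: "(complex \<Rightarrow> complex) \<Rightarrow> ennreal" where
  "h2_sup_integral f = (SUP x\<in>{0<..}. (\<integral>\<^sup>+ y. ennreal ((cmod (f (Complex x y)))\<^sup>2) \<partial>lborel))"

text \<open>Hardy space H^2 of the right half-plane (functions are only relevant on the half-plane).\<close>
definition H2 :: "(complex \<Rightarrow> complex) set" where
  "H2 = {f. f holomorphic_on right_half_plane \<and> h2_sup_integral f < \<infinity>}"

definition h2_norm :: "(complex \<Rightarrow> complex) \<Rightarrow> real" where
  "h2_norm f = sqrt (enn2real (h2_sup_integral f) / pi)"

definition comp_op :: "(complex \<Rightarrow> complex) \<Rightarrow> (complex \<Rightarrow> complex) \<Rightarrow> (complex \<Rightarrow> complex)" where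
  "comp_op \<phi> f = f \<circ> \<phi>"

definition li_yorke_chaotic_H2 ::
    "((complex \<Rightarrow> complex) \<Rightarrow> (complex \<Rightarrow> complex)) \<Rightarrow> bool" where
  "li_yorke_chaotic_H2 T \<longleftrightarrow>
     (\<exists>S. S \<subseteq> H2 \<and> uncountable S \<and>
        (\<forall>f\<in>S. \<forall>g\<in>S. f \<noteq> g \<longrightarrow>
           liminf (\<lambda>n. ereal (h2_norm ((T ^^ n) f - (T ^^ n) g))) = 0 \<and>
           limsup (\<lambda>n. ereal (h2_norm ((T ^^ n) f - (T ^^ n) g))) > 0))"

end

theory Submission
  imports Defs "HOL-Complex_Analysis.Complex_Analysis"
begin

text \<open>
  Let \<open>h = f - g\<close> for two distinct points \<open>f\<close>, \<open>g\<close> of a Li-Yorke set. The iterates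
  \<open>\<phi>\<^sup>n(w) = a\<^sup>n w + \<beta>\<^sub>n\<close> are affine with \<open>Re \<beta>\<^sub>n \<ge> 0\<close>, and rescaling vertical lines gives
  \<open>\<parallel>h \<circ> \<phi>\<^sup>n\<parallel>\<^sup>2 = a\<^sup>-\<^sup>n J(Re \<beta>\<^sub>n) / \<pi>\<close>, where \<open>J(t)\<close> is the supremum of the integrals
  of \<open>|h|\<^sup>2\<close> over the vertical lines \<open>Re w = s\<close>, \<open>s > t\<close>; \<open>J\<close> is nonincreasing.
  If \<open>a \<ge> 1\<close>, then \<open>Re \<beta>\<^sub>n\<close> increases, so the orbit norms decrease and converge, and
  liminf and limsup agree. If \<open>a < 1\<close>, then \<open>Re \<beta>\<^sub>n\<close> stays below the fixed point
  \<open>C = Re b / (1 - a)\<close> of \<open>x \<mapsto> a x + Re b\<close>, so the orbit norms are at least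
  \<open>(J(C) / \<pi>)\<^sup>1\<^sup>/\<^sup>2\<close>. A vanishing liminf thus forces \<open>J(C) = 0\<close>: \<open>h\<close> vanishes on
  \<open>Re w > C\<close>, hence on the whole half-plane by analytic continuation, and all orbit norms vanish.
\<close>

lemma power2_norm_diff_le:
  fixes u v :: "'a :: real_normed_vector"
  shows "(norm (u - v))\<^sup>2 \<le> 2 * (norm u)\<^sup>2 + 2 * (norm v)\<^sup>2"
proof -
  have "(norm (u - v))\<^sup>2 \<le> (norm u + norm v)\<^sup>2"
    by (simp add: power_mono norm_triangle_ineq4)
  also have "\<dots> \<le> 2 * (norm u)\<^sup>2 + 2 * (norm v)\<^sup>2"
    using zero_le_power2[of "norm u - norm v"] unfolding power2_diff power2_sum by linarith
  finally show ?thesis .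
qed

lemma limsup_eq_liminf_decseq:
  fixes u :: "nat \<Rightarrow> real"
  assumes "decseq u" "\<And>n. B \<le> u n"
  shows "limsup (\<lambda>n. ereal (u n)) = liminf (\<lambda>n. ereal (u n))"
proof -
  obtain L where "u \<longlonglongrightarrow> L"
    using decseq_convergent[OF assms(1), of B] assms(2) by blast
  then have lim: "(\<lambda>n. ereal (u n)) \<longlonglongrightarrow> ereal L"
    by (rule tendsto_ereal)
  show ?thesis
    unfolding lim_imp_Liminf[OF trivial_limit_sequentially lim]
      lim_imp_Limsup[OF trivial_limit_sequentially lim] ..
qed

lemma funpow_affine:
  fixes c d :: "'a :: comm_semiring_1"
  shows "((\<lambda>w. c * w + d) ^^ n) w = c ^ n * w + ((\<lambda>w. c * w + d) ^^ n) 0"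
  by (induction n) (auto simp: algebra_simps)

lemma funpow_comp_op: "(comp_op \<phi> ^^ n) f = f \<circ> (\<phi> ^^ n)"
  by (induction n) (auto simp: comp_op_def funpow_swap1)

context
  fixes a :: real and b :: complex
  assumes a_pos: "a > 0" and Re_b_nonneg: "Re b \<ge> 0"
begin

lemma Re_funpow_affine_nonneg: "Re (((\<lambda>w. complex_of_real a * w + b) ^^ n) 0) \<ge> 0"
  by (induction n) (use a_pos Re_b_nonneg in auto)

lemma Re_funpow_affine_mono:
  assumes "a \<ge> 1"
  shows "Re (((\<lambda>w. complex_of_real a * w + b) ^^ n) 0)
           \<le> Re (((\<lambda>w. complex_of_real a * w + b) ^^ Suc n) 0)"
  using mult_right_mono[OF assms Re_funpow_affine_nonneg[of n]] Re_b_nonneg by simp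

lemma Re_funpow_affine_le_fixed_point:
  assumes "a < 1"
  shows "Re (((\<lambda>w. complex_of_real a * w + b) ^^ n) 0) \<le> Re b / (1 - a)"
proof (induction n)
  case 0
  show ?case
    using assms Re_b_nonneg by simp
next
  case (Suc n)
  have "a * (Re b / (1 - a)) + Re b = Re b / (1 - a)"
    using assms by (simp add: field_simps)
  then show ?case
    using mult_left_mono[OF Suc less_imp_le[OF a_pos]] by simp
qed

end

definition vertical_line_integral :: "(complex \<Rightarrow> complex) \<Rightarrow> real \<Rightarrow> ennreal" where
  "vertical_line_integral h x = (\<integral>\<^sup>+ y. ennreal ((cmod (h (Complex x y)))\<^sup>2) \<partial>lborel)"

definition sup_vertical_line_integral :: "(complex \<Rightarrow> complex) \<Rightarrow> real \<Rightarrow> ennreal" where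
  "sup_vertical_line_integral h t = (SUP x\<in>{t<..}. vertical_line_integral h x)"

lemma h2_sup_integral_eq_sup_vertical_line_integral:
  "h2_sup_integral h = sup_vertical_line_integral h 0"
  unfolding sup_vertical_line_integral_def h2_sup_integral_def vertical_line_integral_def by simp

lemma sup_vertical_line_integral_antimono:
  "t \<le> t' \<Longrightarrow> sup_vertical_line_integral h t' \<le> sup_vertical_line_integral h t"
  unfolding sup_vertical_line_integral_def by (rule SUP_subset_mono) auto

lemma continuous_on_vertical_line:
  assumes "continuous_on right_half_plane h" "x > 0"
  shows "continuous_on UNIV (\<lambda>y. h (Complex x y))"
proof -
  have "continuous_on UNIV (\<lambda>y::real. Complex x y)"
    unfolding Complex_eq by (intro continuous_intros)
  then show ?thesis
    by (rule continuous_on_compose2[OF assms(1)])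
      (use assms(2) in \<open>auto simp: right_half_plane_def\<close>)
qed

lemma borel_measurable_vertical_line:
  assumes "continuous_on right_half_plane h" "x > 0"
  shows "(\<lambda>y. ennreal ((cmod (h (Complex x y)))\<^sup>2)) \<in> borel_measurable borel"
proof -
  have [measurable]: "(\<lambda>y. h (Complex x y)) \<in> borel_measurable borel"
    by (rule borel_measurable_continuous_onI[OF continuous_on_vertical_line[OF assms]])
  show ?thesis by measurable
qed

lemma vertical_line_integral_rescale:
  assumes "continuous_on right_half_plane h" "A > 0" "x > 0"
  shows "(\<integral>\<^sup>+ y. ennreal ((cmod (h (Complex x (A * y + c))))\<^sup>2) \<partial>lborel)
           = ennreal (1 / A) * vertical_line_integral h x"
proof -
  have "vertical_line_integral h x
          = ennreal A * (\<integral>\<^sup>+ y. ennreal ((cmod (h (Complex x (c + A * y))))\<^sup>2) \<partial>lborel)"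
    unfolding vertical_line_integral_def
    using nn_integral_real_affine[OF borel_measurable_vertical_line[OF assms(1,3)], of A c] assms
    by simp
  moreover have "ennreal (1 / A) * ennreal A = 1"
    using assms by (simp flip: ennreal_mult)
  ultimately show ?thesis
    by (simp add: add.commute mult.assoc[symmetric])
qed

lemma h2_sup_integral_comp_affine:
  assumes "continuous_on right_half_plane h" "A > 0" "Re B \<ge> 0"
  shows "h2_sup_integral (h \<circ> (\<lambda>w. complex_of_real A * w + B))
           = ennreal (1 / A) * sup_vertical_line_integral h (Re B)"
proof -
  have "h2_sup_integral (h \<circ> (\<lambda>w. complex_of_real A * w + B))
          = (SUP x\<in>{0<..}. ennreal (1 / A) * vertical_line_integral h (A * x + Re B))"
    unfolding h2_sup_integral_def
  proof (rule SUP_cong[OF refl])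
    fix x :: real
    assume "x \<in> {0<..}"
    then have "A * x + Re B > 0"
      using assms by (simp add: add_pos_nonneg)
    moreover have "complex_of_real A * Complex x y + B = Complex (A * x + Re B) (A * y + Im B)" for y
      by (simp add: complex_eq_iff)
    ultimately show "(\<integral>\<^sup>+ y. ennreal ((cmod ((h \<circ> (\<lambda>w. complex_of_real A * w + B)) (Complex x y)))\<^sup>2) \<partial>lborel)
                       = ennreal (1 / A) * vertical_line_integral h (A * x + Re B)"
      using vertical_line_integral_rescale[OF assms(1,2)] by simp
  qed
  also have "\<dots> = ennreal (1 / A) * (SUP s\<in>(\<lambda>x. A * x + Re B) ` {0<..}. vertical_line_integral h s)"
    by (simp add: SUP_mult_left_ennreal image_image)
  also have "(\<lambda>x. A * x + Re B) ` {0<..} = {Re B<..}"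
  proof (intro equalityI subsetI)
    fix s
    assume "s \<in> {Re B<..}"
    then have "s = A * ((s - Re B) / A) + Re B" "(s - Re B) / A > 0"
      using assms(2) by auto
    then show "s \<in> (\<lambda>x. A * x + Re B) ` {0<..}"
      by blast
  qed (use assms(2) in auto)
  finally show ?thesis
    unfolding sup_vertical_line_integral_def .
qed

lemma vertical_line_integral_eq_0_imp_zero:
  assumes "continuous_on right_half_plane h" "x > 0" "vertical_line_integral h x = 0"
  shows "h (Complex x y) = 0"
proof -
  have "(\<lambda>y. ennreal ((cmod (h (Complex x y)))\<^sup>2)) \<in> borel_measurable lborel"
    using borel_measurable_vertical_line[OF assms(1,2)] by simp
  then have "AE y in lborel. ennreal ((cmod (h (Complex x y)))\<^sup>2) = 0"
    using assms(3) unfolding vertical_line_integral_def by (simp add: nn_integral_0_iff_AE)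
  then have "AE y in lebesgue. y \<in> {y. h (Complex x y) = 0}"
    by (rule AE_completion[THEN eventually_mono]) simp
  moreover have "closed {y. h (Complex x y) = 0}"
    by (rule closed_Collect_eq[OF continuous_on_vertical_line[OF assms(1,2)] continuous_on_const])
  ultimately show ?thesis
    using mem_closed_if_AE_lebesgue by blast
qed

lemma h2_sup_integral_eq_0_if_sup_vertical_line_integral_eq_0:
  assumes "h holomorphic_on right_half_plane" "t \<ge> 0" "sup_vertical_line_integral h t = 0"
  shows "h2_sup_integral h = 0"
proof -
  have "h w = 0" if "w \<in> right_half_plane" for w
  proof (rule analytic_continuation[OF assms(1), where U = "{z. Re z > t}" and \<xi> = "of_real (t + 1)"])
    show "open right_half_plane" "connected right_half_plane"
      unfolding right_half_plane_def
      by (auto intro: open_halfspace_Re_gt convex_connected convex_halfspace_Re_gt)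
    show "{z. Re z > t} \<subseteq> right_half_plane" "of_real (t + 1) \<in> right_half_plane"
      using assms(2) by (auto simp: right_half_plane_def)
    show "of_real (t + 1) islimpt {z. Re z > t}"
      by (rule interior_limit_point) (simp add: interior_open[OF open_halfspace_Re_gt])
    show "w \<in> right_half_plane"
      by fact
    fix z
    assume "z \<in> {z. Re z > t}"
    then have "Re z > 0" "vertical_line_integral h (Re z) = 0"
      using assms(2,3) SUP_upper[of "Re z" "{t<..}" "vertical_line_integral h"]
      unfolding sup_vertical_line_integral_def by auto
    from vertical_line_integral_eq_0_imp_zero[OF holomorphic_on_imp_continuous_on[OF assms(1)] this, of "Im z"]
    show "h z = 0"
      by simp
  qed
  then show ?thesis
    unfolding h2_sup_integral_def by (simp add: right_half_plane_def)
qed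

lemma h2_sup_integral_diff_le:
  assumes "continuous_on right_half_plane f" "continuous_on right_half_plane g"
  shows "h2_sup_integral (f - g) \<le> 2 * h2_sup_integral f + 2 * h2_sup_integral g"
  unfolding h2_sup_integral_def
proof (rule SUP_least)
  fix x :: real
  assume x: "x \<in> {0<..}"
  have "(\<integral>\<^sup>+ y. ennreal ((cmod ((f - g) (Complex x y)))\<^sup>2) \<partial>lborel)
          \<le> (\<integral>\<^sup>+ y. 2 * ennreal ((cmod (f (Complex x y)))\<^sup>2)
                   + 2 * ennreal ((cmod (g (Complex x y)))\<^sup>2) \<partial>lborel)"
    using ennreal_leI[OF power2_norm_diff_le]
    by (intro nn_integral_mono) (simp add: ennreal_plus ennreal_mult'')
  also have "\<dots> = 2 * (\<integral>\<^sup>+ y. ennreal ((cmod (f (Complex x y)))\<^sup>2) \<partial>lborel)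
                  + 2 * (\<integral>\<^sup>+ y. ennreal ((cmod (g (Complex x y)))\<^sup>2) \<partial>lborel)"
    using borel_measurable_vertical_line[OF assms(1)] borel_measurable_vertical_line[OF assms(2)] x
    by (subst nn_integral_add) (auto simp: nn_integral_cmult)
  also have "\<dots> \<le> 2 * (SUP x\<in>{0<..}. \<integral>\<^sup>+ y. ennreal ((cmod (f (Complex x y)))\<^sup>2) \<partial>lborel)
                  + 2 * (SUP x\<in>{0<..}. \<integral>\<^sup>+ y. ennreal ((cmod (g (Complex x y)))\<^sup>2) \<partial>lborel)"
    using x by (intro add_mono mult_left_mono SUP_upper) auto
  finally show "(\<integral>\<^sup>+ y. ennreal ((cmod ((f - g) (Complex x y)))\<^sup>2) \<partial>lborel) \<le> \<dots>" .
qed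

lemma H2_diff:
  assumes "f \<in> H2" "g \<in> H2"
  shows "f - g \<in> H2"
proof -
  have "h2_sup_integral (f - g) \<le> 2 * h2_sup_integral f + 2 * h2_sup_integral g"
    using assms holomorphic_on_imp_continuous_on unfolding H2_def
    by (intro h2_sup_integral_diff_le) auto
  also have "\<dots> < \<infinity>"
    using assms unfolding H2_def by (simp add: ennreal_mult_less_top ennreal_add_less_top)
  finally show ?thesis
    using assms unfolding H2_def fun_diff_def by (auto intro: holomorphic_on_diff)
qed

lemma sup_vertical_line_integral_less_top:
  assumes "h \<in> H2" "t \<ge> 0"
  shows "sup_vertical_line_integral h t < top"
proof -
  have "sup_vertical_line_integral h t \<le> h2_sup_integral h"
    unfolding h2_sup_integral_eq_sup_vertical_line_integral
    using assms(2) by (rule sup_vertical_line_integral_antimono)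
  then show ?thesis
    using assms(1) unfolding H2_def by auto
qed

lemma enn2real_sup_vertical_line_integral_antimono:
  assumes "h \<in> H2" "0 \<le> t" "t \<le> t'"
  shows "enn2real (sup_vertical_line_integral h t') \<le> enn2real (sup_vertical_line_integral h t)"
  using sup_vertical_line_integral_antimono[OF assms(3)] sup_vertical_line_integral_less_top[OF assms(1,2)]
  by (rule enn2real_mono)

lemma h2_norm_comp_funpow_affine:
  assumes "continuous_on right_half_plane h" "a > 0" "Re b \<ge> 0"
  defines "\<phi> \<equiv> \<lambda>w. complex_of_real a * w + b"
  shows "h2_norm (h \<circ> (\<phi> ^^ n))
           = sqrt (enn2real (sup_vertical_line_integral h (Re ((\<phi> ^^ n) 0))) / (a ^ n * pi))"
proof -
  define A where "A = a ^ n"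
  define B where "B = (\<phi> ^^ n) 0"
  have "(\<phi> ^^ n) w = complex_of_real A * w + B" for w
    unfolding \<phi>_def A_def B_def by (subst funpow_affine) simp
  then have "\<phi> ^^ n = (\<lambda>w. complex_of_real A * w + B)"
    by (rule ext)
  moreover have "A > 0" "Re B \<ge> 0"
    unfolding A_def B_def \<phi>_def using assms(2) Re_funpow_affine_nonneg[OF assms(2,3)] by simp_all
  ultimately have "h2_sup_integral (h \<circ> (\<phi> ^^ n)) = ennreal (1 / A) * sup_vertical_line_integral h (Re B)"
    using h2_sup_integral_comp_affine[OF assms(1)] by simp
  then show ?thesis
    unfolding h2_norm_def A_def B_def using assms(2) by (simp add: enn2real_mult)
qed

lemma h2_norm_comp_funpow_affine_decseq:
  assumes "h \<in> H2" "a \<ge> 1" "Re b \<ge> 0"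
  defines "\<phi> \<equiv> \<lambda>w. complex_of_real a * w + b"
  shows "decseq (\<lambda>n. h2_norm (h \<circ> (\<phi> ^^ n)))"
proof (rule decseq_SucI)
  fix n
  have a_pos: "a > 0"
    using assms(2) by simp
  have cont: "continuous_on right_half_plane h"
    using assms(1) holomorphic_on_imp_continuous_on unfolding H2_def by blast
  let ?j = "\<lambda>n. enn2real (sup_vertical_line_integral h (Re ((\<phi> ^^ n) 0)))"
  have "?j (Suc n) \<le> ?j n"
    unfolding \<phi>_def
    by (intro enn2real_sup_vertical_line_integral_antimono assms(1)
        Re_funpow_affine_nonneg Re_funpow_affine_mono a_pos assms(2,3))
  moreover have "a ^ n \<le> a ^ Suc n"
    using assms(2) by simp
  ultimately have "?j (Suc n) / (a ^ Suc n * pi) \<le> ?j n / (a ^ n * pi)"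
    using a_pos by (intro frac_le) auto
  then show "h2_norm (h \<circ> (\<phi> ^^ Suc n)) \<le> h2_norm (h \<circ> (\<phi> ^^ n))"
    unfolding \<phi>_def h2_norm_comp_funpow_affine[OF cont a_pos assms(3)]
    by (rule real_sqrt_le_mono)
qed

lemma h2_norm_comp_funpow_affine_lower_bound:
  assumes "h \<in> H2" "a > 0" "a < 1" "Re b \<ge> 0"
  defines "\<phi> \<equiv> \<lambda>w. complex_of_real a * w + b"
  shows "sqrt (enn2real (sup_vertical_line_integral h (Re b / (1 - a))) / pi)
           \<le> h2_norm (h \<circ> (\<phi> ^^ n))"
proof -
  have cont: "continuous_on right_half_plane h"
    using assms(1) holomorphic_on_imp_continuous_on unfolding H2_def by blast
  let ?j = "\<lambda>t. enn2real (sup_vertical_line_integral h t)"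
  have "?j (Re b / (1 - a)) \<le> ?j (Re ((\<phi> ^^ n) 0))"
    unfolding \<phi>_def
    by (intro enn2real_sup_vertical_line_integral_antimono assms(1)
        Re_funpow_affine_nonneg Re_funpow_affine_le_fixed_point assms(2-4))
  moreover have "a ^ n \<le> 1"
    using assms(2,3) by (simp add: power_le_one)
  ultimately have "?j (Re b / (1 - a)) / (1 * pi) \<le> ?j (Re ((\<phi> ^^ n) 0)) / (a ^ n * pi)"
    using assms(2) by (intro frac_le) auto
  then show ?thesis
    unfolding \<phi>_def h2_norm_comp_funpow_affine[OF cont assms(2,4)]
    by (simp add: real_sqrt_le_mono)
qed

lemma h2_sup_integral_eq_0_if_liminf_h2_norm_comp_funpow_affine_eq_0:
  assumes "h \<in> H2" "a > 0" "a < 1" "Re b \<ge> 0"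
  defines "\<phi> \<equiv> \<lambda>w. complex_of_real a * w + b"
  assumes "liminf (\<lambda>n. ereal (h2_norm (h \<circ> (\<phi> ^^ n)))) = 0"
  shows "h2_sup_integral h = 0"
proof -
  define C where "C = Re b / (1 - a)"
  have "C \<ge> 0"
    unfolding C_def using assms(3,4) by simp
  have "ereal (sqrt (enn2real (sup_vertical_line_integral h C) / pi))
          \<le> liminf (\<lambda>n. ereal (h2_norm (h \<circ> (\<phi> ^^ n))))"
    using h2_norm_comp_funpow_affine_lower_bound[OF assms(1-4)]
    unfolding C_def \<phi>_def by (intro Liminf_bounded) simp
  then have "enn2real (sup_vertical_line_integral h C) / pi \<le> 0"
    using assms(6) by simp
  then have "enn2real (sup_vertical_line_integral h C) = 0"
    using enn2real_nonneg[of "sup_vertical_line_integral h C"] pi_gt_zero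
    by (auto simp: divide_le_0_iff)
  then have "sup_vertical_line_integral h C = 0"
    using sup_vertical_line_integral_less_top[OF assms(1) \<open>C \<ge> 0\<close>]
    by (auto simp: enn2real_eq_0_iff)
  then show ?thesis
    using h2_sup_integral_eq_0_if_sup_vertical_line_integral_eq_0[OF _ \<open>C \<ge> 0\<close>] assms(1)
    unfolding H2_def by simp
qed

lemma h2_norm_comp_funpow_affine_eq_0:
  assumes "continuous_on right_half_plane h" "a > 0" "Re b \<ge> 0" "h2_sup_integral h = 0"
  defines "\<phi> \<equiv> \<lambda>w. complex_of_real a * w + b"
  shows "h2_norm (h \<circ> (\<phi> ^^ n)) = 0"
proof -
  have "sup_vertical_line_integral h (Re ((\<phi> ^^ n) 0)) \<le> sup_vertical_line_integral h 0"
    unfolding \<phi>_def using Re_funpow_affine_nonneg[OF assms(2,3)]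
    by (rule sup_vertical_line_integral_antimono)
  then have "sup_vertical_line_integral h (Re ((\<phi> ^^ n) 0)) = 0"
    using assms(4) unfolding h2_sup_integral_eq_sup_vertical_line_integral by simp
  then show ?thesis
    unfolding \<phi>_def h2_norm_comp_funpow_affine[OF assms(1-3)] by simp
qed

lemma limsup_h2_norm_comp_funpow_affine_eq_0:
  assumes "h \<in> H2" "a > 0" "Re b \<ge> 0"
  defines "\<phi> \<equiv> \<lambda>w. complex_of_real a * w + b"
  assumes liminf_0: "liminf (\<lambda>n. ereal (h2_norm (h \<circ> (\<phi> ^^ n)))) = 0"
  shows "limsup (\<lambda>n. ereal (h2_norm (h \<circ> (\<phi> ^^ n)))) = 0"
proof (cases "a \<ge> 1")
  case True
  have h2_norm_nonneg: "0 \<le> h2_norm f" for f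
    unfolding h2_norm_def by simp
  show ?thesis
    using limsup_eq_liminf_decseq[OF h2_norm_comp_funpow_affine_decseq[OF assms(1) True assms(3)]
        h2_norm_nonneg] liminf_0 unfolding \<phi>_def by simp
next
  case False
  then have "h2_sup_integral h = 0"
    using h2_sup_integral_eq_0_if_liminf_h2_norm_comp_funpow_affine_eq_0 assms liminf_0
    unfolding \<phi>_def by simp
  moreover have "continuous_on right_half_plane h"
    using assms(1) holomorphic_on_imp_continuous_on unfolding H2_def by blast
  ultimately show ?thesis
    using h2_norm_comp_funpow_affine_eq_0 assms(2,3) unfolding \<phi>_def by (simp add: Limsup_const)
qed

theorem theorem5p1:
  fixes a :: real and b :: complex
  assumes "a > 0" and "Re b \<ge> 0"
  shows "\<not> li_yorke_chaotic_H2 (comp_op (\<lambda>w. complex_of_real a * w + b))"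
proof
  let ?\<phi> = "\<lambda>w. complex_of_real a * w + b"
  assume "li_yorke_chaotic_H2 (comp_op ?\<phi>)"
  then obtain S where "S \<subseteq> H2" and "uncountable S" and li_yorke_pairs:
    "\<forall>f\<in>S. \<forall>g\<in>S. f \<noteq> g \<longrightarrow>
       liminf (\<lambda>n. ereal (h2_norm ((comp_op ?\<phi> ^^ n) f - (comp_op ?\<phi> ^^ n) g))) = 0 \<and>
       limsup (\<lambda>n. ereal (h2_norm ((comp_op ?\<phi> ^^ n) f - (comp_op ?\<phi> ^^ n) g))) > 0"
    unfolding li_yorke_chaotic_H2_def by blast
  obtain f where "f \<in> S"
    using \<open>uncountable S\<close> by (metis countable_empty equals0I)
  moreover have "S \<noteq> {f}"
    using \<open>uncountable S\<close> by auto
  ultimately obtain g where "g \<in> S" "f \<noteq> g"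
    by blast
  have orbit: "(comp_op ?\<phi> ^^ n) f - (comp_op ?\<phi> ^^ n) g = (f - g) \<circ> (?\<phi> ^^ n)" for n
    by (simp add: funpow_comp_op fun_eq_iff)
  have "liminf (\<lambda>n. ereal (h2_norm ((f - g) \<circ> (?\<phi> ^^ n)))) = 0"
    "limsup (\<lambda>n. ereal (h2_norm ((f - g) \<circ> (?\<phi> ^^ n)))) > 0"
    using li_yorke_pairs[rule_format, OF \<open>f \<in> S\<close> \<open>g \<in> S\<close> \<open>f \<noteq> g\<close>]
    unfolding orbit by simp_all
  moreover have "f - g \<in> H2"
    using H2_diff \<open>S \<subseteq> H2\<close> \<open>f \<in> S\<close> \<open>g \<in> S\<close> by blast
  ultimately show False
    using limsup_h2_norm_comp_funpow_affine_eq_0[OF _ assms] by simp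
qed

end
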